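(* Let $\mathcal{X}=\{x_1,\dots,x_M\}$ and $\mathcal{Y}=\{y_1,\dots,y_N\}$ be finite sets (in this fixed enumeration), let $p(x)$ be a probability distribution on $\mathcal{X}$, and let $c:\mathcal{X}\times\mathcal{Y}\to[0,\infty]$ be a cost function that is staircase nondecreasing, i.e. (i) for all $1\le i<j\le M$ and all $y\in\mathcal{Y}$, if $c(x_i,y)=\infty$ then $c(x_j,y)=\infty$; and (ii) for all $1\le i<j\le N$ and all $x\in\mathcal{X}$, if $c(x,y_i)<\infty$ then $c(x,y_i)\le c(x,y_j)<\infty$. Assume that at least one protection scheme (defined below) exists. Then: 1. For every $\alpha>0$, $$\min_{(\mathscr{L},\mathscr{C})\in S}\ \mathscr{C}+\alpha\mathscr{L} \;=\; \min_{(\mathscr{L},\mathscr{C})\in S_d}\ \mathscr{C}+\alpha\mathscr{L}.$$ 2. For every $L\ge 1$, the pair $(L,C^*(L))$ is achieved by $\mathbf{P}=\lambda\mathbf{P}_1+(1-\lambda)\mathbf{P}_2$ for some $\lambda\in[0,1]$ and some deterministic protection schemes $\mathbf{P}_1,\mathbf{P}_2$, such that $\mathscr{L}(\mathbf{P})\le L$ and $C^*(L)\le \lambda\, C^*_d(\mathscr{L}(\mathbf{P}_1))+(1-\lambda)\,C^*_d(\mathscr{L}(\mathbf{P}_2))$.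
   Context: For any $M\times N$ matrix $\mathbf{A}=\{a_{xy}\}$ (rows indexed by $\mathcal{X}$, columns by $\mathcal{Y}$), the total cost is $\mathscr{C}(\mathbf{A})=\sum_{x,y}p(x)c(x,y)a_{xy}$ (with the convention $0\cdot\infty=0$), and the exponentiated maximal leakage (exp-leak) is $\mathscr{L}(\mathbf{A})=\sum_{y}\max_{x}a_{xy}$. A protection scheme is an $M\times N$ matrix $\mathbf{P}=\{p_{xy}\}$ with nonnegative entries, each row summing to $1$ (interpreted as $p_{xy}=\Pr(Y=y\mid X=x)$), and with $\mathscr{C}(\mathbf{P})<\infty$. It is deterministic if every entry is $0$ or $1$. A pair $(L,C)$ is achieved by $\mathbf{P}$ if $\mathscr{L}(\mathbf{P})\le L$ and $\mathscr{C}(\mathbf{P})\le C$. $S$ is the set of all pairs $(L,C)$ achieved by some protection scheme, and $S_d$ the set of all pairs achieved by some deterministic protection scheme. $C^*(L)=\inf\{C:(L,C)\in S\}$ and $C^*_d(L)=\inf\{C:(L,C)\in S_d\}$. *)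

theory Defs
  imports "HOL-Analysis.Analysis"
begin

text \<open>Indices: rows x_1..x_M are 0..M-1, columns y_1..y_N are 0..N-1 (same order).
Matrices are functions nat => nat => real; only entries with x < M, y < N matter.
Costs take values in [0,infinity] = ennreal, where 0 * top = 0.\<close>

definition total_cost :: "nat \<Rightarrow> nat \<Rightarrow> (nat \<Rightarrow> real) \<Rightarrow> (nat \<Rightarrow> nat \<Rightarrow> ennreal)
    \<Rightarrow> (nat \<Rightarrow> nat \<Rightarrow> real) \<Rightarrow> ennreal" where
  "total_cost M N p c A = (\<Sum>x<M. \<Sum>y<N. ennreal (p x) * c x y * ennreal (A x y))"

definition exp_leak :: "nat \<Rightarrow> nat \<Rightarrow> (nat \<Rightarrow> nat \<Rightarrow> real) \<Rightarrow> real" where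
  "exp_leak M N A = (\<Sum>y<N. Max ((\<lambda>x. A x y) ` {..<M}))"

definition prot_scheme :: "nat \<Rightarrow> nat \<Rightarrow> (nat \<Rightarrow> real) \<Rightarrow> (nat \<Rightarrow> nat \<Rightarrow> ennreal)
    \<Rightarrow> (nat \<Rightarrow> nat \<Rightarrow> real) \<Rightarrow> bool" where
  "prot_scheme M N p c P \<longleftrightarrow>
     (\<forall>x<M. \<forall>y<N. 0 \<le> P x y) \<and> (\<forall>x<M. (\<Sum>y<N. P x y) = 1) \<and>
     total_cost M N p c P < \<infinity>"

definition det_scheme :: "nat \<Rightarrow> nat \<Rightarrow> (nat \<Rightarrow> real) \<Rightarrow> (nat \<Rightarrow> nat \<Rightarrow> ennreal)
    \<Rightarrow> (nat \<Rightarrow> nat \<Rightarrow> real) \<Rightarrow> bool" where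
  "det_scheme M N p c P \<longleftrightarrow> prot_scheme M N p c P \<and> (\<forall>x<M. \<forall>y<N. P x y = 0 \<or> P x y = 1)"

definition cost :: "nat \<Rightarrow> nat \<Rightarrow> (nat \<Rightarrow> real) \<Rightarrow> (nat \<Rightarrow> nat \<Rightarrow> ennreal)
    \<Rightarrow> (nat \<Rightarrow> nat \<Rightarrow> real) \<Rightarrow> real" where
  "cost M N p c A = enn2real (total_cost M N p c A)"

definition achieves :: "nat \<Rightarrow> nat \<Rightarrow> (nat \<Rightarrow> real) \<Rightarrow> (nat \<Rightarrow> nat \<Rightarrow> ennreal)
    \<Rightarrow> (nat \<Rightarrow> nat \<Rightarrow> real) \<Rightarrow> real \<Rightarrow> real \<Rightarrow> bool" where
  "achieves M N p c P L C \<longleftrightarrow> exp_leak M N P \<le> L \<and> total_cost M N p c P \<le> ennreal C \<and> 0 \<le> C"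

definition S_set :: "nat \<Rightarrow> nat \<Rightarrow> (nat \<Rightarrow> real) \<Rightarrow> (nat \<Rightarrow> nat \<Rightarrow> ennreal) \<Rightarrow> (real \<times> real) set" where
  "S_set M N p c = {(L, C). \<exists>P. prot_scheme M N p c P \<and> achieves M N p c P L C}"

definition Sd_set :: "nat \<Rightarrow> nat \<Rightarrow> (nat \<Rightarrow> real) \<Rightarrow> (nat \<Rightarrow> nat \<Rightarrow> ennreal) \<Rightarrow> (real \<times> real) set" where
  "Sd_set M N p c = {(L, C). \<exists>P. det_scheme M N p c P \<and> achieves M N p c P L C}"

definition Cstar :: "nat \<Rightarrow> nat \<Rightarrow> (nat \<Rightarrow> real) \<Rightarrow> (nat \<Rightarrow> nat \<Rightarrow> ennreal) \<Rightarrow> real \<Rightarrow> real" where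
  "Cstar M N p c L = Inf {C. (L, C) \<in> S_set M N p c}"

definition Cstar_d :: "nat \<Rightarrow> nat \<Rightarrow> (nat \<Rightarrow> real) \<Rightarrow> (nat \<Rightarrow> nat \<Rightarrow> ennreal) \<Rightarrow> real \<Rightarrow> real" where
  "Cstar_d M N p c L = Inf {C. (L, C) \<in> Sd_set M N p c}"

definition staircase_nondecr :: "nat \<Rightarrow> nat \<Rightarrow> (nat \<Rightarrow> nat \<Rightarrow> ennreal) \<Rightarrow> bool" where
  "staircase_nondecr M N c \<longleftrightarrow>
     (\<forall>i j y. i < j \<and> j < M \<and> y < N \<and> c i y = \<infinity> \<longrightarrow> c j y = \<infinity>) \<and>
     (\<forall>i j x. i < j \<and> j < N \<and> x < M \<and> c x i < \<infinity> \<longrightarrow> c x i \<le> c x j \<and> c x j < \<infinity>)"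

end

theory Submission
  imports Defs
begin

text \<open>
For every \<open>\<alpha> \<ge> 0\<close> and every protection scheme \<open>P\<close> some deterministic scheme \<open>f\<close> satisfies
\<open>cost f + \<alpha> leak f \<le> cost P + \<alpha> leak P\<close>, and both parts of the theorem follow from this.
Let \<open>S y\<close> be the sum of the first \<open>y\<close> column maxima of \<open>P\<close>, so that \<open>S N\<close> is the leakage of \<open>P\<close>,
and fix a threshold \<open>\<theta> \<in> [0,1)\<close>. Send row \<open>x\<close> to the first column at or after its first
finite-cost column \<open>k\<close> across which \<open>\<lceil>S - \<theta>\<rceil>\<close> exceeds its value at \<open>k\<close>. From \<open>k\<close> on the
costs of row \<open>x\<close> are finite and nondecreasing (staircase condition (ii)); writing them as sums of
increments, the average over \<open>\<theta> = j/K\<close> of the rounded cost is at most the cost of \<open>P\<close> plus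
\<open>O(1/K)\<close>. As there are finitely many deterministic schemes, the best one satisfies the inequality
exactly.

For part 2, a line of slope \<open>\<alpha> \<ge> 0\<close> supports the finite point set \<open>{(leak f, cost f)}\<close> from
below at two points whose leakages lie on either side of \<open>L\<close> (or \<open>\<alpha> = 0\<close>); mixing them to
leakage \<open>L\<close> gives a scheme that, by the inequality above, no scheme of leakage \<open>\<le> L\<close> undercuts.
\<close>

lemma sum_by_parts:
  fixes a u :: "nat \<Rightarrow> 'a::comm_ring"
  assumes "k \<le> n"
  shows "(\<Sum>y=k..<n. a y * u y) = a k * (\<Sum>y=k..<n. u y)
           + (\<Sum>y=Suc k..<n. (a y - a (y - 1)) * (\<Sum>z=y..<n. u z))"
  using assms
proof (induction n rule: dec_induct)
  case base
  show ?case by simp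
next
  case (step m)
  have "(\<Sum>y=Suc k..<Suc m. (a y - a (y - 1)) * (\<Sum>z=y..<Suc m. u z))
      = (\<Sum>y=Suc k..<Suc m. (a y - a (y - 1)) * (\<Sum>z=y..<m. u z) + (a y - a (y - 1)) * u m)"
    by (intro sum.cong refl) (simp add: distrib_left)
  also have "\<dots> = (\<Sum>y=Suc k..<m. (a y - a (y - 1)) * (\<Sum>z=y..<m. u z))
        + (\<Sum>y=Suc k..<Suc m. a y - a (y - 1)) * u m"
    using step.hyps by (simp add: sum.distrib sum_distrib_right distrib_right)
  also have "(\<Sum>y=Suc k..<Suc m. a y - a (y - 1)) = a m - a k"
    using sum_telescope''[OF step.hyps(1)] by (simp add: atLeastLessThanSuc_atLeastAtMost)
  finally show ?case
    using step.hyps step.IH by (simp add: algebra_simps)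
qed

lemma ceiling_shift_frac:
  assumes "0 \<le> \<theta>" "\<theta> < 1"
  shows "\<lceil>s - \<theta>\<rceil> = \<lfloor>s\<rfloor> + (if \<theta> < frac s then 1 else 0)"
proof -
  have "\<lceil>s - \<theta>\<rceil> = \<lceil>(frac s - \<theta>) + of_int \<lfloor>s\<rfloor>\<rceil>"
    by (simp add: frac_def)
  also have "\<dots> = \<lceil>frac s - \<theta>\<rceil> + \<lfloor>s\<rfloor>"
    by (rule ceiling_add_of_int)
  also have "\<lceil>frac s - \<theta>\<rceil> = (if \<theta> < frac s then 1 else 0)"
  proof (cases "\<theta> < frac s")
    case True
    then show ?thesis
      using assms frac_lt_1[of s] by (simp add: ceiling_unique)
  next
    case False
    moreover have "- 1 < frac s - \<theta>"
      using assms(2) frac_ge_0[of s] by linarith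
    ultimately show ?thesis
      by (simp add: ceiling_unique)
  qed
  finally show ?thesis
    by simp
qed

lemma sum_ceiling_shifts:
  assumes K: "0 < K"
  shows "(\<Sum>j<K. \<lceil>s - real j / real K\<rceil>) = int K * \<lfloor>s\<rfloor> + \<lceil>real K * frac s\<rceil>"
proof -
  have "(\<Sum>j<K. \<lceil>s - real j / real K\<rceil>) = (\<Sum>j<K. \<lfloor>s\<rfloor> + (if real j < real K * frac s then 1 else 0))"
  proof (intro sum.cong refl)
    fix j assume "j \<in> {..<K}"
    then have "0 \<le> real j / real K" "real j / real K < 1"
      using K by auto
    moreover have "real j / real K < frac s \<longleftrightarrow> real j < real K * frac s"
      using K by (simp add: divide_less_eq mult.commute)
    ultimately show "\<lceil>s - real j / real K\<rceil> = \<lfloor>s\<rfloor> + (if real j < real K * frac s then 1 else 0)"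
      by (simp add: ceiling_shift_frac)
  qed
  also have "\<dots> = int K * \<lfloor>s\<rfloor> + int (card {j\<in>{..<K}. real j < real K * frac s})"
    by (simp add: sum.distrib sum.If_cases Int_def)
  also have "{j\<in>{..<K}. real j < real K * frac s} = {..<nat \<lceil>real K * frac s\<rceil>}"
  proof -
    have "real K * frac s \<le> real K"
      using frac_lt_1[of s] by (simp add: mult_left_le)
    then have le_K: "nat \<lceil>real K * frac s\<rceil> \<le> K"
      by (metis ceiling_mono ceiling_of_nat nat_int nat_mono)
    have below: "real j < real K * frac s \<longleftrightarrow> j < nat \<lceil>real K * frac s\<rceil>" for j
      by (meson linorder_not_less nat_ceiling_le_eq)
    show ?thesis
      unfolding below by (auto intro: less_le_trans[OF _ le_K])
  qed
  also have "int (card {..<nat \<lceil>real K * frac s\<rceil>}) = \<lceil>real K * frac s\<rceil>"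
  proof -
    have "- 1 < real K * frac s"
      by (smt (verit) frac_ge_0 mult_nonneg_nonneg of_nat_0_le_iff)
    then show ?thesis
      by simp
  qed
  finally show ?thesis .
qed

lemma sum_ceiling_shifts_bounds:
  assumes "0 < K"
  shows "real K * s \<le> (\<Sum>j<K. real_of_int \<lceil>s - real j / real K\<rceil>)"
    and "(\<Sum>j<K. real_of_int \<lceil>s - real j / real K\<rceil>) \<le> real K * s + 1"
proof -
  have "(\<Sum>j<K. real_of_int \<lceil>s - real j / real K\<rceil>) = real K * \<lfloor>s\<rfloor> + \<lceil>real K * frac s\<rceil>"
    using arg_cong[OF sum_ceiling_shifts[OF assms, of s], of real_of_int] by simp
  moreover have "real K * s = real K * \<lfloor>s\<rfloor> + real K * frac s"
    by (simp add: frac_def algebra_simps)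
  ultimately show "real K * s \<le> (\<Sum>j<K. real_of_int \<lceil>s - real j / real K\<rceil>)"
    and "(\<Sum>j<K. real_of_int \<lceil>s - real j / real K\<rceil>) \<le> real K * s + 1"
    by linarith+
qed

lemma exists_le_average:
  fixes v :: "nat \<Rightarrow> real"
  assumes "0 < K" "(\<Sum>j<K. v j) \<le> real K * B"
  shows "\<exists>j<K. v j \<le> B"
proof (rule ccontr)
  assume "\<not> ?thesis"
  then have "(\<Sum>j<K. B) < (\<Sum>j<K. v j)"
    using assms(1) by (intro sum_strict_mono) auto
  with assms(2) show False by simp
qed

lemma ex_minimizer_finite:
  fixes f :: "'a \<Rightarrow> 'b::linorder"
  assumes "finite F" "F \<noteq> {}"
  shows "\<exists>x\<in>F. \<forall>y\<in>F. f x \<le> f y"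
  using ex_is_arg_min_if_finite[OF assms, of f] unfolding is_arg_min_linorder by blast

lemma supporting_line_across_level:
  fixes y x :: "'a \<Rightarrow> real"
  assumes fin: "finite A" "finite B" and "A \<noteq> {}"
    and b0: "b0 \<in> B" "\<forall>g\<in>A \<union> B. y b0 \<le> y g"
    and below: "\<forall>a\<in>A. x a \<le> L" and above: "\<forall>b\<in>B. L < x b"
  shows "\<exists>\<alpha>\<ge>0. \<exists>a\<in>A. \<exists>b\<in>B. y a + \<alpha> * x a = y b + \<alpha> * x b \<and>
           (\<forall>g\<in>A \<union> B. y a + \<alpha> * x a \<le> y g + \<alpha> * x g)"
proof -
  define slope where "slope a b = (y a - y b) / (x b - x a)" for a b
  have gap: "0 < x b - x a" if "a \<in> A" "b \<in> B" for a b
    using below above that by fastforce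
  define \<beta> where "\<beta> b = Min ((\<lambda>a. slope a b) ` A)" for b
  define \<alpha> where "\<alpha> = Max (\<beta> ` B)"
  have \<beta>_attained: "\<exists>a\<in>A. \<beta> b = slope a b" for b
  proof -
    have "Min ((\<lambda>a. slope a b) ` A) \<in> (\<lambda>a. slope a b) ` A"
      using fin(1) \<open>A \<noteq> {}\<close> by (intro Min_in) auto
    then show ?thesis
      unfolding \<beta>_def by auto
  qed
  have \<beta>_le: "\<beta> b \<le> slope a b" if "a \<in> A" for a b
    unfolding \<beta>_def using fin that by (intro Min_le) auto
  have \<beta>_le_\<alpha>: "\<beta> b \<le> \<alpha>" if "b \<in> B" for b
    unfolding \<alpha>_def using fin that by (intro Max_ge) auto
  have "\<alpha> \<in> \<beta> ` B"
    unfolding \<alpha>_def using fin(2) b0(1) by (intro Max_in) auto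
  then obtain bs where bs: "bs \<in> B" "\<alpha> = \<beta> bs"
    by auto
  obtain as where as: "as \<in> A" "\<alpha> = slope as bs"
    using \<beta>_attained[of bs] bs(2) by auto
  have "0 \<le> \<alpha>"
  proof -
    obtain a where a: "a \<in> A" "\<beta> b0 = slope a b0"
      using \<beta>_attained by blast
    have "0 \<le> slope a b0"
      unfolding slope_def using b0(2) a(1) gap[OF a(1) b0(1)] by simp
    with a(2) \<beta>_le_\<alpha>[OF b0(1)] show ?thesis
      by simp
  qed
  have value_as: "y as + \<alpha> * x as = y bs + \<alpha> * x bs"
    using as(2) gap[OF as(1) bs(1)] unfolding slope_def by (simp add: field_simps)
  have support_A: "y bs + \<alpha> * x bs \<le> y a + \<alpha> * x a" if a: "a \<in> A" for a
  proof -
    have "\<alpha> \<le> slope a bs"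
      using \<beta>_le[OF a, of bs] bs(2) by simp
    then show ?thesis
      unfolding slope_def using gap[OF a bs(1)] by (simp add: le_divide_eq algebra_simps)
  qed
  have support_B: "y bs + \<alpha> * x bs \<le> y b + \<alpha> * x b" if b: "b \<in> B" for b
  proof -
    obtain a where a: "a \<in> A" "\<beta> b = slope a b"
      using \<beta>_attained by blast
    have "slope a b \<le> \<alpha>"
      using \<beta>_le_\<alpha>[OF b] a(2) by simp
    then have "y a + \<alpha> * x a \<le> y b + \<alpha> * x b"
      unfolding slope_def using gap[OF a(1) b] by (simp add: divide_le_eq algebra_simps)
    with support_A[OF a(1)] show ?thesis
      by simp
  qed
  have "\<forall>g\<in>A \<union> B. y as + \<alpha> * x as \<le> y g + \<alpha> * x g"
    using value_as support_A support_B by auto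
  with \<open>0 \<le> \<alpha>\<close> as(1) bs(1) value_as show ?thesis
    by blast
qed

lemma supporting_line_at_level:
  fixes y x :: "'a \<Rightarrow> real"
  assumes fin: "finite F" and f0: "f0 \<in> F" "x f0 \<le> L"
  shows "\<exists>\<alpha>\<ge>0. \<exists>a\<in>F. \<exists>b\<in>F. \<exists>t. 0 \<le> t \<and> t \<le> 1 \<and>
           (\<forall>g\<in>F. y a + \<alpha> * x a \<le> y g + \<alpha> * x g) \<and>
           y a + \<alpha> * x a = y b + \<alpha> * x b \<and>
           t * x a + (1 - t) * x b \<le> L \<and> \<alpha> * (t * x a + (1 - t) * x b) = \<alpha> * L"
proof -
  obtain g0 where g0: "g0 \<in> F" "\<forall>g\<in>F. y g0 \<le> y g"
    using ex_minimizer_finite[OF fin, of y] f0(1) by blast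
  show ?thesis
  proof (cases "x g0 \<le> L")
    case True
    show ?thesis
      by (intro exI[of _ 0] exI[of _ 1] conjI bexI[OF _ g0(1)]) (use g0 True in auto)
  next
    case False
    define A where "A = {f\<in>F. x f \<le> L}"
    define B where "B = {f\<in>F. L < x f}"
    have "F = A \<union> B"
      unfolding A_def B_def by auto
    have "\<exists>\<alpha>\<ge>0. \<exists>a\<in>A. \<exists>b\<in>B. y a + \<alpha> * x a = y b + \<alpha> * x b \<and>
           (\<forall>g\<in>A \<union> B. y a + \<alpha> * x a \<le> y g + \<alpha> * x g)"
    proof (rule supporting_line_across_level)
      show "finite A" "finite B" "A \<noteq> {}" "g0 \<in> B"
        using fin f0 g0(1) False unfolding A_def B_def by auto
      show "\<forall>g\<in>A \<union> B. y g0 \<le> y g" "\<forall>a\<in>A. x a \<le> L" "\<forall>b\<in>B. L < x b"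
        using g0(2) unfolding A_def B_def by auto
    qed
    then obtain \<alpha> a b where "0 \<le> \<alpha>" and ab: "a \<in> A" "b \<in> B"
      and value_eq: "y a + \<alpha> * x a = y b + \<alpha> * x b"
      and support: "\<forall>g\<in>F. y a + \<alpha> * x a \<le> y g + \<alpha> * x g"
      unfolding \<open>F = A \<union> B\<close> by blast
    have x_ab: "x a \<le> L" "L < x b"
      using ab unfolding A_def B_def by auto
    define t where "t = (x b - L) / (x b - x a)"
    have "0 \<le> t" "t \<le> 1"
      unfolding t_def using x_ab by (auto simp: divide_le_eq)
    moreover have "t * x a + (1 - t) * x b = L"
    proof -
      have "t * (x b - x a) = x b - L"
        unfolding t_def using x_ab by simp
      then show ?thesis
        by (simp add: algebra_simps)
    qed
    ultimately show ?thesis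
      using \<open>0 \<le> \<alpha>\<close> ab support value_eq \<open>F = A \<union> B\<close>
      by (intro exI[of _ \<alpha>] conjI bexI[of _ a] bexI[of _ b] exI[of _ t]) auto
  qed
qed

lemma Max_column_ge:
  fixes A :: "nat \<Rightarrow> nat \<Rightarrow> real"
  shows "x < M \<Longrightarrow> A x y \<le> Max ((\<lambda>x. A x y) ` {..<M})"
  by (rule Max_ge) auto

locale leakage_problem =
  fixes M N :: nat and p :: "nat \<Rightarrow> real" and c :: "nat \<Rightarrow> nat \<Rightarrow> ennreal"
  assumes p_nonneg: "\<forall>x<M. 0 \<le> p x" and p_sum: "(\<Sum>x<M. p x) = 1"
    and staircase: "staircase_nondecr M N c"
    and scheme_exists: "\<exists>P. prot_scheme M N p c P"
begin

definition fin_cost :: "nat \<Rightarrow> nat \<Rightarrow> real" where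
  "fin_cost x y = enn2real (c x y)"

definition avoids_inf_cost :: "(nat \<Rightarrow> nat \<Rightarrow> real) \<Rightarrow> bool" where
  "avoids_inf_cost P \<longleftrightarrow> (\<forall>x<M. \<forall>y<N. p x = 0 \<or> P x y = 0 \<or> c x y < \<infinity>)"

lemma M_pos: "0 < M"
  using p_sum by (cases M) auto

lemma N_pos: "0 < N"
proof -
  obtain P where "prot_scheme M N p c P"
    using scheme_exists by auto
  then have "(\<Sum>y<N. P 0 y) = 1"
    using M_pos unfolding prot_scheme_def by auto
  then show ?thesis
    by (cases N) auto
qed

lemma cost_term_finite_iff:
  assumes "x < M" "0 \<le> a"
  shows "ennreal (p x) * c x y * ennreal a < \<infinity> \<longleftrightarrow> p x = 0 \<or> a = 0 \<or> c x y < \<infinity>"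
  using assms p_nonneg by (auto simp: ennreal_mult_less_top top.not_eq_extremum)

lemma cost_term_eq:
  assumes "x < M" "0 \<le> a" "p x = 0 \<or> a = 0 \<or> c x y < \<infinity>"
  shows "ennreal (p x) * c x y * ennreal a = ennreal (p x * fin_cost x y * a)"
proof (cases "p x = 0 \<or> a = 0")
  case False
  then have "c x y = ennreal (fin_cost x y)"
    using assms(3) unfolding fin_cost_def by (auto simp: less_top)
  then show ?thesis
    using assms p_nonneg by (simp add: ennreal_mult fin_cost_def)
qed auto

lemma total_cost_eq_sum:
  assumes nonneg: "\<forall>x<M. \<forall>y<N. 0 \<le> P x y" and "avoids_inf_cost P"
  shows "total_cost M N p c P = ennreal (\<Sum>x<M. \<Sum>y<N. p x * fin_cost x y * P x y)"
proof -
  have terms_nonneg: "0 \<le> p x * fin_cost x y * P x y" if "x < M" "y < N" for x y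
    using that nonneg p_nonneg by (simp add: fin_cost_def)
  have "total_cost M N p c P = (\<Sum>x<M. \<Sum>y<N. ennreal (p x * fin_cost x y * P x y))"
    unfolding total_cost_def using assms unfolding avoids_inf_cost_def
    by (intro sum.cong refl cost_term_eq) auto
  also have "\<dots> = (\<Sum>x<M. ennreal (\<Sum>y<N. p x * fin_cost x y * P x y))"
    using terms_nonneg by (intro sum.cong refl sum_ennreal) auto
  also have "\<dots> = ennreal (\<Sum>x<M. \<Sum>y<N. p x * fin_cost x y * P x y)"
    using terms_nonneg by (intro sum_ennreal sum_nonneg) auto
  finally show ?thesis .
qed

lemma prot_scheme_iff:
  "prot_scheme M N p c P \<longleftrightarrow>
     (\<forall>x<M. \<forall>y<N. 0 \<le> P x y) \<and> (\<forall>x<M. (\<Sum>y<N. P x y) = 1) \<and> avoids_inf_cost P"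
proof -
  have "avoids_inf_cost P" if "(\<forall>x<M. \<forall>y<N. 0 \<le> P x y)" "total_cost M N p c P < \<infinity>"
    using that cost_term_finite_iff
    unfolding avoids_inf_cost_def total_cost_def by (auto simp: ennreal_sum_less_top)
  then show ?thesis
    unfolding prot_scheme_def using total_cost_eq_sum by auto
qed

lemma cost_eq_sum:
  assumes "prot_scheme M N p c P"
  shows "cost M N p c P = (\<Sum>x<M. \<Sum>y<N. p x * fin_cost x y * P x y)"
proof -
  have "0 \<le> (\<Sum>x<M. \<Sum>y<N. p x * fin_cost x y * P x y)"
    using assms p_nonneg unfolding prot_scheme_iff
    by (intro sum_nonneg mult_nonneg_nonneg) (auto simp: fin_cost_def)
  then show ?thesis
    using assms total_cost_eq_sum unfolding prot_scheme_iff cost_def by simp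
qed

lemma achieves_iff:
  assumes "prot_scheme M N p c P"
  shows "achieves M N p c P L C \<longleftrightarrow> exp_leak M N P \<le> L \<and> cost M N p c P \<le> C \<and> 0 \<le> C"
proof -
  have "total_cost M N p c P = ennreal (cost M N p c P)"
    using assms unfolding prot_scheme_def cost_def by (simp add: less_top)
  then show ?thesis
    unfolding achieves_def by (auto simp: ennreal_le_iff)
qed

lemma mixture:
  assumes P1: "prot_scheme M N p c P1" and P2: "prot_scheme M N p c P2"
    and t: "0 \<le> t" "t \<le> 1"
  defines "P \<equiv> \<lambda>x y. t * P1 x y + (1 - t) * P2 x y"
  shows "prot_scheme M N p c P"
    and "cost M N p c P = t * cost M N p c P1 + (1 - t) * cost M N p c P2"
    and "exp_leak M N P \<le> t * exp_leak M N P1 + (1 - t) * exp_leak M N P2"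
proof -
  show P: "prot_scheme M N p c P"
    using P1 P2 t unfolding prot_scheme_iff avoids_inf_cost_def P_def
    by (fastforce simp: sum.distrib sum_distrib_left[symmetric])
  show "cost M N p c P = t * cost M N p c P1 + (1 - t) * cost M N p c P2"
    unfolding cost_eq_sum[OF P] cost_eq_sum[OF P1] cost_eq_sum[OF P2]
    by (simp add: P_def algebra_simps sum.distrib sum_distrib_left sum_subtractf)
  have col: "Max ((\<lambda>x. P x y) ` {..<M})
          \<le> t * Max ((\<lambda>x. P1 x y) ` {..<M}) + (1 - t) * Max ((\<lambda>x. P2 x y) ` {..<M})" for y
    using M_pos t unfolding P_def
    by (intro Max.boundedI) (auto intro!: add_mono mult_left_mono Max_column_ge)
  have "exp_leak M N P \<le> (\<Sum>y<N. t * Max ((\<lambda>x. P1 x y) ` {..<M})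
                                  + (1 - t) * Max ((\<lambda>x. P2 x y) ` {..<M}))"
    unfolding exp_leak_def by (intro sum_mono col)
  also have "\<dots> = t * exp_leak M N P1 + (1 - t) * exp_leak M N P2"
    unfolding exp_leak_def by (simp add: sum.distrib sum_distrib_left)
  finally show "exp_leak M N P \<le> t * exp_leak M N P1 + (1 - t) * exp_leak M N P2" .
qed

lemma staircase_right:
  assumes "i < j" "j < N" "x < M" "c x i < \<infinity>"
  shows "c x i \<le> c x j" and "c x j < \<infinity>"
  using staircase assms unfolding staircase_nondecr_def by blast+

lemma last_column_finite:
  assumes x: "x < M" and "0 < p x"
  shows "c x (N - 1) < \<infinity>"
proof -
  obtain P where P: "prot_scheme M N p c P"
    using scheme_exists by auto
  have "\<exists>y<N. P x y \<noteq> 0"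
    using P x unfolding prot_scheme_def by (metis (no_types) lessThan_iff sum.neutral zero_neq_one)
  then obtain y where y: "y < N" "P x y \<noteq> 0"
    by auto
  then have "c x y < \<infinity>"
    using P x \<open>0 < p x\<close> unfolding prot_scheme_iff avoids_inf_cost_def by fastforce
  then show ?thesis
    using staircase_right(2)[of y "N - 1" x] x y by (cases "y = N - 1") auto
qed

lemma mult_p_mono:
  assumes "x < M" "0 < p x \<Longrightarrow> a \<le> b"
  shows "p x * a \<le> p x * b"
  using assms p_nonneg by (cases "p x = 0") (auto simp: order_le_less)

(* 0 is a junk value on rows of probability zero, whose costs never matter. *)
definition first_fin :: "nat \<Rightarrow> nat" where
  "first_fin x = (if 0 < p x then LEAST y. c x y < \<infinity> else 0)"

lemma first_fin_lt:
  assumes "x < M"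
  shows "first_fin x < N"
proof (cases "0 < p x")
  case True
  have "(LEAST y. c x y < \<infinity>) \<le> N - 1"
    by (rule Least_le) (rule last_column_finite[OF assms True])
  then show ?thesis
    using N_pos True unfolding first_fin_def by simp
qed (use N_pos in \<open>simp add: first_fin_def\<close>)

lemma c_first_fin:
  assumes "x < M" "0 < p x"
  shows "c x (first_fin x) < \<infinity>"
  using LeastI[of "\<lambda>y. c x y < \<infinity>", OF last_column_finite[OF assms]] assms
  unfolding first_fin_def by simp

lemma c_below_first_fin:
  assumes "0 < p x" "y < first_fin x"
  shows "c x y = \<infinity>"
  using assms not_less_Least[of y "\<lambda>y. c x y < \<infinity>"] unfolding first_fin_def
  using top.not_eq_extremum by fastforce

lemma c_from_first_fin:
  assumes "x < M" "0 < p x" "first_fin x \<le> y" "y < N"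
  shows "c x y < \<infinity>"
  using assms c_first_fin staircase_right(2)[of "first_fin x" y x]
  by (cases "first_fin x = y") auto

lemma fin_cost_mono:
  assumes "x < M" "0 < p x" "first_fin x \<le> y" "y \<le> y'" "y' < N"
  shows "fin_cost x y \<le> fin_cost x y'"
proof (cases "y = y'")
  case False
  have "c x y \<le> c x y'" "c x y' < \<infinity>"
    using staircase_right[of y y' x] c_from_first_fin[of x y] assms False by auto
  then show ?thesis
    unfolding fin_cost_def by (intro enn2real_mono) simp_all
qed simp

definition cost_incr :: "nat \<Rightarrow> nat \<Rightarrow> real" where
  "cost_incr x y = fin_cost x y - fin_cost x (y - 1)"

lemma cost_incr_nonneg:
  assumes "x < M" "0 < p x" "y \<in> {Suc (first_fin x)..<N}"
  shows "0 \<le> cost_incr x y"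
  using fin_cost_mono[OF assms(1,2), of "y - 1" y] assms(3) unfolding cost_incr_def by auto

definition det_matrix :: "(nat \<Rightarrow> nat) \<Rightarrow> nat \<Rightarrow> nat \<Rightarrow> real" where
  "det_matrix f x y = (if f x = y then 1 else 0)"

definition det_maps :: "(nat \<Rightarrow> nat) set" where
  "det_maps = {f \<in> {..<M} \<rightarrow>\<^sub>E {..<N}. \<forall>x<M. 0 < p x \<longrightarrow> c x (f x) < \<infinity>}"

abbreviation det_cost :: "(nat \<Rightarrow> nat) \<Rightarrow> real" where
  "det_cost f \<equiv> cost M N p c (det_matrix f)"

abbreviation det_leak :: "(nat \<Rightarrow> nat) \<Rightarrow> real" where
  "det_leak f \<equiv> exp_leak M N (det_matrix f)"

lemma finite_det_maps: "finite det_maps"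
  unfolding det_maps_def by (rule finite_subset[OF _ finite_PiE[of "{..<M}" "\<lambda>_. {..<N}"]]) auto

lemma prot_scheme_det_matrix:
  assumes "f \<in> det_maps"
  shows "prot_scheme M N p c (det_matrix f)"
proof -
  have "(\<Sum>y<N. det_matrix f x y) = 1" if "x < M" for x
    using assms that unfolding det_maps_def det_matrix_def by (auto simp: sum.delta)
  moreover have "avoids_inf_cost (det_matrix f)"
    using assms p_nonneg unfolding avoids_inf_cost_def det_matrix_def det_maps_def
    by (auto simp: order_le_less)
  ultimately show ?thesis
    unfolding prot_scheme_iff by (auto simp: det_matrix_def)
qed

lemma det_scheme_det_matrix: "f \<in> det_maps \<Longrightarrow> det_scheme M N p c (det_matrix f)"
  using prot_scheme_det_matrix unfolding det_scheme_def det_matrix_def by auto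

lemma det_cost_eq:
  assumes "f \<in> det_maps"
  shows "det_cost f = (\<Sum>x<M. p x * fin_cost x (f x))"
  unfolding cost_eq_sum[OF prot_scheme_det_matrix[OF assms]]
proof (intro sum.cong refl)
  fix x assume "x \<in> {..<M}"
  then have "f x \<in> {..<N}"
    using assms unfolding det_maps_def by auto
  then show "(\<Sum>y<N. p x * fin_cost x y * det_matrix f x y) = p x * fin_cost x (f x)"
    unfolding det_matrix_def by (simp add: if_distrib sum.delta cong: if_cong)
qed

lemma det_leak_eq:
  assumes "f \<in> det_maps"
  shows "det_leak f = card (f ` {..<M})"
proof -
  have "Max ((\<lambda>x. det_matrix f x y) ` {..<M}) = (if y \<in> f ` {..<M} then 1 else 0)" for y
  proof (cases "y \<in> f ` {..<M}")
    case True
    then show ?thesis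
      by (intro Max_eqI) (auto simp: det_matrix_def)
  next
    case False
    then have "(\<lambda>x. det_matrix f x y) ` {..<M} = {0}"
      using M_pos unfolding det_matrix_def by auto
    with False show ?thesis
      by simp
  qed
  moreover have "f ` {..<M} \<subseteq> {..<N}"
    using assms unfolding det_maps_def by auto
  ultimately show ?thesis
    unfolding exp_leak_def by (simp add: sum.If_cases Int_absorb1)
qed

lemma det_map_leak_1: "\<exists>f\<in>det_maps. det_leak f = 1"
proof
  let ?f = "restrict (\<lambda>_. N - 1) {..<M}"
  show f: "?f \<in> det_maps"
    unfolding det_maps_def using N_pos last_column_finite by auto
  have "?f ` {..<M} = {N - 1}"
    using M_pos by auto
  then show "det_leak ?f = 1"
    using det_leak_eq[OF f] by simp
qed

end

definition level :: "real \<Rightarrow> real \<Rightarrow> real" where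
  "level \<theta> s = real_of_int \<lceil>s - \<theta>\<rceil>"

lemma level_mono: "s \<le> s' \<Longrightarrow> level \<theta> s \<le> level \<theta> s'"
  unfolding level_def by (simp add: ceiling_mono)

lemma level_add_1: "level \<theta> (s + 1) = level \<theta> s + 1"
proof -
  have "s + 1 - \<theta> = (s - \<theta>) + 1"
    by simp
  then have "\<lceil>s + 1 - \<theta>\<rceil> = \<lceil>s - \<theta>\<rceil> + 1"
    by (simp only: ceiling_add_one)
  then show ?thesis
    unfolding level_def by simp
qed

lemma level_0: "0 \<le> \<theta> \<Longrightarrow> \<theta> < 1 \<Longrightarrow> level \<theta> 0 = 0"
  unfolding level_def by (simp add: ceiling_unique)

lemma level_less_imp_add_1_le:
  assumes "level \<theta> a < level \<theta> b"
  shows "level \<theta> a + 1 \<le> level \<theta> b"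
proof -
  have "\<lceil>a - \<theta>\<rceil> + 1 \<le> \<lceil>b - \<theta>\<rceil>"
    using assms unfolding level_def by simp
  then show ?thesis
    unfolding level_def by (metis of_int_1 of_int_add of_int_le_iff)
qed

lemma level_le_add_1: "b < a + 1 \<Longrightarrow> level \<theta> b \<le> level \<theta> a + 1"
  using level_mono[of b "a + 1" \<theta>] level_add_1[of \<theta> a] by simp

lemma level_less: "a + 1 \<le> b \<Longrightarrow> level \<theta> a < level \<theta> b"
  using level_mono[of "a + 1" b \<theta>] level_add_1[of \<theta> a] by simp

locale rounding = leakage_problem +
  fixes P :: "nat \<Rightarrow> nat \<Rightarrow> real"
  assumes P: "prot_scheme M N p c P"
begin

lemma P_nonneg: "x < M \<Longrightarrow> y < N \<Longrightarrow> 0 \<le> P x y"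
  using P unfolding prot_scheme_iff by auto

lemma P_row_sum: "x < M \<Longrightarrow> (\<Sum>y<N. P x y) = 1"
  using P unfolding prot_scheme_iff by auto

lemma P_below_first_fin:
  assumes "x < M" "y < first_fin x"
  shows "P x y = 0"
proof (cases "0 < p x")
  case True
  moreover have "y < N"
    using assms first_fin_lt by (meson less_trans)
  ultimately show ?thesis
    using P assms c_below_first_fin[OF True assms(2)] unfolding prot_scheme_iff avoids_inf_cost_def
    by fastforce
qed (use assms in \<open>simp add: first_fin_def\<close>)

lemma P_row_sum_from_first_fin:
  assumes "x < M"
  shows "(\<Sum>y=first_fin x..<N. P x y) = 1"
proof -
  have "(\<Sum>y<N. P x y) = (\<Sum>y<first_fin x. P x y) + (\<Sum>y=first_fin x..<N. P x y)"
    using first_fin_lt[OF assms]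
    by (simp add: lessThan_atLeast0 sum.atLeastLessThan_concat)
  moreover have "(\<Sum>y<first_fin x. P x y) = 0"
    using P_below_first_fin assms by simp
  ultimately show ?thesis
    using P_row_sum assms by simp
qed

definition col_max :: "nat \<Rightarrow> real" where
  "col_max y = Max ((\<lambda>x. P x y) ` {..<M})"

definition cum_leak :: "nat \<Rightarrow> real" where
  "cum_leak y = (\<Sum>z<y. col_max z)"

definition tail_mass :: "nat \<Rightarrow> nat \<Rightarrow> real" where
  "tail_mass x y = (\<Sum>z=y..<N. P x z)"

lemma P_le_col_max: "x < M \<Longrightarrow> P x y \<le> col_max y"
  unfolding col_max_def by (rule Max_column_ge)

lemma cum_leak_diff:
  assumes "a \<le> b"
  shows "cum_leak b - cum_leak a = (\<Sum>z=a..<b. col_max z)"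
  unfolding cum_leak_def lessThan_atLeast0 using assms
  by (simp add: sum_diff_nat_ivl)

lemma col_max_nonneg: "y < N \<Longrightarrow> 0 \<le> col_max y"
  using P_le_col_max[of 0 y] P_nonneg[of 0 y] M_pos by linarith

lemma cum_leak_mono:
  assumes "a \<le> b" "b \<le> N"
  shows "cum_leak a \<le> cum_leak b"
proof -
  have "0 \<le> (\<Sum>z=a..<b. col_max z)"
    using assms col_max_nonneg by (intro sum_nonneg) auto
  then show ?thesis
    using cum_leak_diff[OF assms(1)] by simp
qed

lemma cum_leak_0: "cum_leak 0 = 0"
  unfolding cum_leak_def by simp

lemma cum_leak_N: "cum_leak N = exp_leak M N P"
  unfolding cum_leak_def exp_leak_def col_max_def ..

lemma cum_leak_gap:
  assumes "x < M"
  shows "cum_leak (first_fin x) + 1 \<le> cum_leak N"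
proof -
  have "1 = (\<Sum>y=first_fin x..<N. P x y)"
    using P_row_sum_from_first_fin[OF assms] by simp
  also have "\<dots> \<le> (\<Sum>y=first_fin x..<N. col_max y)"
    using P_le_col_max assms by (intro sum_mono) auto
  also have "\<dots> = cum_leak N - cum_leak (first_fin x)"
    using cum_leak_diff first_fin_lt[OF assms] by simp
  finally show ?thesis
    by simp
qed

lemma tail_mass_nonneg: "x < M \<Longrightarrow> 0 \<le> tail_mass x y"
  unfolding tail_mass_def using P_nonneg by (intro sum_nonneg) auto

lemma tail_mass_lower:
  assumes "x < M" "first_fin x \<le> y" "y \<le> N"
  shows "1 - (cum_leak y - cum_leak (first_fin x)) \<le> tail_mass x y"
proof -
  have "1 = (\<Sum>z=first_fin x..<y. P x z) + tail_mass x y"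
    using P_row_sum_from_first_fin[OF assms(1)] assms(2,3)
    unfolding tail_mass_def by (simp add: sum.atLeastLessThan_concat)
  moreover have "(\<Sum>z=first_fin x..<y. P x z) \<le> cum_leak y - cum_leak (first_fin x)"
    unfolding cum_leak_diff[OF assms(2)] using P_le_col_max assms(1) by (intro sum_mono) auto
  ultimately show ?thesis
    by linarith
qed

definition round_col :: "real \<Rightarrow> nat \<Rightarrow> nat" where
  "round_col \<theta> x = (LEAST y. first_fin x \<le> y \<and>
                      level \<theta> (cum_leak (first_fin x)) < level \<theta> (cum_leak (Suc y)))"

definition round_map :: "real \<Rightarrow> nat \<Rightarrow> nat" where
  "round_map \<theta> = restrict (round_col \<theta>) {..<M}"

lemma round_col_spec:
  assumes x: "x < M"
  shows "first_fin x \<le> round_col \<theta> x" and "round_col \<theta> x < N"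
    and "level \<theta> (cum_leak (first_fin x)) < level \<theta> (cum_leak (Suc (round_col \<theta> x)))"
    and "\<And>y. first_fin x \<le> y \<Longrightarrow> y < round_col \<theta> x \<Longrightarrow>
           level \<theta> (cum_leak (Suc y)) \<le> level \<theta> (cum_leak (first_fin x))"
proof -
  let ?Q = "\<lambda>y. first_fin x \<le> y \<and> level \<theta> (cum_leak (first_fin x)) < level \<theta> (cum_leak (Suc y))"
  have "?Q (N - 1)"
    using first_fin_lt[OF x] N_pos level_less[OF cum_leak_gap[OF x]] by simp
  then have "?Q (round_col \<theta> x)" and "round_col \<theta> x \<le> N - 1"
    unfolding round_col_def by (rule LeastI, rule Least_le)
  then show "first_fin x \<le> round_col \<theta> x" "round_col \<theta> x < N"
    "level \<theta> (cum_leak (first_fin x)) < level \<theta> (cum_leak (Suc (round_col \<theta> x)))"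
    using N_pos by auto
  show "level \<theta> (cum_leak (Suc y)) \<le> level \<theta> (cum_leak (first_fin x))"
    if "first_fin x \<le> y" "y < round_col \<theta> x" for y
    using not_less_Least[of y ?Q] that unfolding round_col_def by auto
qed

lemma le_round_col_iff:
  assumes x: "x < M" and y: "first_fin x < y" "y < N"
  shows "y \<le> round_col \<theta> x \<longleftrightarrow> level \<theta> (cum_leak y) \<le> level \<theta> (cum_leak (first_fin x))"
proof
  assume "y \<le> round_col \<theta> x"
  then show "level \<theta> (cum_leak y) \<le> level \<theta> (cum_leak (first_fin x))"
    using round_col_spec(4)[OF x, of "y - 1" \<theta>] y by auto
next
  assume le: "level \<theta> (cum_leak y) \<le> level \<theta> (cum_leak (first_fin x))"
  show "y \<le> round_col \<theta> x"
  proof (rule ccontr)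
    assume "\<not> y \<le> round_col \<theta> x"
    then have "level \<theta> (cum_leak (Suc (round_col \<theta> x))) \<le> level \<theta> (cum_leak y)"
      using y by (intro level_mono cum_leak_mono) auto
    then show False
      using le round_col_spec(3)[OF x, of \<theta>] by simp
  qed
qed

lemma level_rises_at_round_col:
  assumes x: "x < M"
  shows "level \<theta> (cum_leak (round_col \<theta> x)) < level \<theta> (cum_leak (Suc (round_col \<theta> x)))"
proof (cases "round_col \<theta> x = first_fin x")
  case False
  then have "first_fin x < round_col \<theta> x"
    using round_col_spec(1)[OF x, of \<theta>] by simp
  then have "level \<theta> (cum_leak (round_col \<theta> x)) \<le> level \<theta> (cum_leak (first_fin x))"
    using le_round_col_iff[OF x _ round_col_spec(2)[OF x]] by blast
  then show ?thesis
    using round_col_spec(3)[OF x, of \<theta>] by simp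
qed (use round_col_spec(3)[OF x, of \<theta>] in simp)

lemma round_map_det_map: "round_map \<theta> \<in> det_maps"
  unfolding det_maps_def round_map_def
  using round_col_spec(1,2) c_from_first_fin by auto

lemma det_leak_round_map:
  assumes \<theta>: "0 \<le> \<theta>" "\<theta> < 1"
  shows "det_leak (round_map \<theta>) \<le> level \<theta> (exp_leak M N P)"
proof -
  let ?rises = "{y\<in>{..<N}. level \<theta> (cum_leak y) < level \<theta> (cum_leak (Suc y))}"
  have "round_map \<theta> ` {..<M} = round_col \<theta> ` {..<M}"
    unfolding round_map_def by auto
  then have "det_leak (round_map \<theta>) = card (round_col \<theta> ` {..<M})"
    using det_leak_eq[OF round_map_det_map] by simp
  also have "\<dots> \<le> card ?rises"
    using round_col_spec(2) level_rises_at_round_col by (intro of_nat_mono card_mono) auto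
  also have "real (card ?rises) = (\<Sum>y<N. if level \<theta> (cum_leak y) < level \<theta> (cum_leak (Suc y)) then 1 else 0)"
    by (simp add: sum.If_cases Int_def)
  also have "\<dots> \<le> (\<Sum>y<N. level \<theta> (cum_leak (Suc y)) - level \<theta> (cum_leak y))"
  proof (intro sum_mono)
    fix y assume "y \<in> {..<N}"
    then have "level \<theta> (cum_leak y) \<le> level \<theta> (cum_leak (Suc y))"
      by (intro level_mono cum_leak_mono) auto
    then show "(if level \<theta> (cum_leak y) < level \<theta> (cum_leak (Suc y)) then 1 else 0)
                 \<le> level \<theta> (cum_leak (Suc y)) - level \<theta> (cum_leak y)"
      using level_less_imp_add_1_le[of \<theta> "cum_leak y" "cum_leak (Suc y)"] by auto
  qed
  also have "\<dots> = level \<theta> (exp_leak M N P)"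
    using sum_lessThan_telescope[of "\<lambda>y. level \<theta> (cum_leak y)" N]
    by (simp add: cum_leak_N cum_leak_0 level_0[OF \<theta>])
  finally show ?thesis
    by simp
qed

lemma fin_cost_round_col:
  assumes x: "x < M"
  shows "fin_cost x (round_col \<theta> x) = fin_cost x (first_fin x)
           + (\<Sum>y=Suc (first_fin x)..<N. cost_incr x y * (if y \<le> round_col \<theta> x then 1 else 0))"
proof -
  let ?D = "round_col \<theta> x"
  have D: "first_fin x \<le> ?D" "?D < N"
    using round_col_spec(1,2)[OF x] by auto
  have "(\<Sum>z=y..<N. if z = ?D then 1 else 0) = (if y \<le> ?D then 1 else (0::real))" for y
    using D by (simp add: sum.delta')
  moreover have "(\<Sum>y=first_fin x..<N. fin_cost x y * (if y = ?D then 1 else 0)) = fin_cost x ?D"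
    using D by (simp add: if_distrib sum.delta' cong: if_cong)
  ultimately show ?thesis
    using sum_by_parts[of "first_fin x" N "fin_cost x" "\<lambda>z. if z = ?D then 1 else 0"] D
    unfolding cost_incr_def by simp
qed

lemma row_cost_by_parts:
  assumes x: "x < M"
  shows "(\<Sum>y<N. fin_cost x y * P x y)
           = fin_cost x (first_fin x) + (\<Sum>y=Suc (first_fin x)..<N. cost_incr x y * tail_mass x y)"
proof -
  have k: "first_fin x \<le> N"
    using first_fin_lt[OF x] by simp
  have "(\<Sum>y<N. fin_cost x y * P x y) = (\<Sum>y=first_fin x..<N. fin_cost x y * P x y)"
    using P_below_first_fin[OF x] k
    by (simp add: lessThan_atLeast0 sum.atLeastLessThan_concat[of 0 "first_fin x" N, symmetric])
  then show ?thesis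
    using sum_by_parts[OF k, of "fin_cost x" "P x"] P_row_sum_from_first_fin[OF x]
    unfolding cost_incr_def tail_mass_def by simp
qed

(* Bounds the indicator of y \<le> round_col \<theta> x by a difference of levels, whose average over \<theta>
   is the gap of cum_leak; once that gap reaches 1 the indicator vanishes. *)
definition col_bound :: "real \<Rightarrow> nat \<Rightarrow> nat \<Rightarrow> real" where
  "col_bound \<theta> x y = (if 1 \<le> cum_leak y - cum_leak (first_fin x) then 0
                       else 1 - level \<theta> (cum_leak y) + level \<theta> (cum_leak (first_fin x)))"

lemma le_round_col_le_col_bound:
  assumes x: "x < M" and y: "first_fin x < y" "y < N"
  shows "(if y \<le> round_col \<theta> x then 1 else 0) \<le> col_bound \<theta> x y"
proof -
  have "level \<theta> (cum_leak (first_fin x)) \<le> level \<theta> (cum_leak y)"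
    using y by (intro level_mono cum_leak_mono) auto
  moreover have "level \<theta> (cum_leak (first_fin x)) < level \<theta> (cum_leak y)"
    if "1 \<le> cum_leak y - cum_leak (first_fin x)"
    using that by (intro level_less) simp
  moreover have "level \<theta> (cum_leak y) \<le> level \<theta> (cum_leak (first_fin x)) + 1"
    if "\<not> 1 \<le> cum_leak y - cum_leak (first_fin x)"
    using that by (intro level_le_add_1) simp
  ultimately show ?thesis
    using le_round_col_iff[OF x y] unfolding col_bound_def by auto
qed

lemma sum_col_bound_le:
  assumes K: "0 < K" and x: "x < M" and y: "first_fin x < y" "y < N"
  shows "(\<Sum>j<K. col_bound (real j / real K) x y) \<le> real K * tail_mass x y + 1"
proof (cases "1 \<le> cum_leak y - cum_leak (first_fin x)")
  case True
  then show ?thesis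
    using tail_mass_nonneg[OF x, of y] unfolding col_bound_def by simp
next
  case False
  let ?lev = "\<lambda>s. \<Sum>j<K. level (real j / real K) s"
  have "(\<Sum>j<K. col_bound (real j / real K) x y) = real K - ?lev (cum_leak y) + ?lev (cum_leak (first_fin x))"
    unfolding col_bound_def using False by (simp add: sum.distrib sum_subtractf)
  also have "\<dots> \<le> real K - real K * cum_leak y + (real K * cum_leak (first_fin x) + 1)"
    using sum_ceiling_shifts_bounds[OF K, of "cum_leak y"]
      sum_ceiling_shifts_bounds[OF K, of "cum_leak (first_fin x)"]
    unfolding level_def by linarith
  also have "\<dots> = real K * (1 - (cum_leak y - cum_leak (first_fin x))) + 1"
    by (simp add: algebra_simps)
  also have "\<dots> \<le> real K * tail_mass x y + 1"
    using tail_mass_lower[OF x, of y] y by (intro add_right_mono mult_left_mono) auto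
  finally show ?thesis .
qed

definition rounding_slack :: real where
  "rounding_slack = (\<Sum>x<M. p x * (\<Sum>y=Suc (first_fin x)..<N. cost_incr x y))"

definition row_bound :: "real \<Rightarrow> nat \<Rightarrow> real" where
  "row_bound \<theta> x = fin_cost x (first_fin x) + (\<Sum>y=Suc (first_fin x)..<N. cost_incr x y * col_bound \<theta> x y)"

lemma fin_cost_round_col_le:
  assumes x: "x < M" and "0 < p x"
  shows "fin_cost x (round_col \<theta> x) \<le> row_bound \<theta> x"
  unfolding fin_cost_round_col[OF x] row_bound_def
  using cost_incr_nonneg[OF x \<open>0 < p x\<close>] le_round_col_le_col_bound[OF x]
  by (intro add_left_mono sum_mono mult_left_mono) auto

lemma sum_row_bound_le:
  assumes K: "0 < K" and x: "x < M" and "0 < p x"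
  shows "(\<Sum>j<K. row_bound (real j / real K) x)
           \<le> real K * (\<Sum>y<N. fin_cost x y * P x y) + (\<Sum>y=Suc (first_fin x)..<N. cost_incr x y)"
proof -
  have "(\<Sum>j<K. row_bound (real j / real K) x)
      = real K * fin_cost x (first_fin x)
        + (\<Sum>y=Suc (first_fin x)..<N. cost_incr x y * (\<Sum>j<K. col_bound (real j / real K) x y))"
    unfolding row_bound_def by (simp add: sum.distrib sum_distrib_left sum.swap[of _ "{..<K}"])
  also have "\<dots> \<le> real K * fin_cost x (first_fin x)
        + (\<Sum>y=Suc (first_fin x)..<N. cost_incr x y * (real K * tail_mass x y + 1))"
    using cost_incr_nonneg[OF x \<open>0 < p x\<close>] sum_col_bound_le[OF K x]
    by (intro add_left_mono sum_mono mult_left_mono) auto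
  also have "\<dots> = real K * (\<Sum>y<N. fin_cost x y * P x y) + (\<Sum>y=Suc (first_fin x)..<N. cost_incr x y)"
    unfolding row_cost_by_parts[OF x] by (simp add: algebra_simps sum.distrib sum_distrib_left)
  finally show ?thesis .
qed

lemma sum_det_cost_round_map_le:
  assumes K: "0 < K"
  shows "(\<Sum>j<K. det_cost (round_map (real j / real K))) \<le> real K * cost M N p c P + rounding_slack"
proof -
  have row: "p x * fin_cost x (round_col \<theta> x) \<le> p x * row_bound \<theta> x" if "x < M" for x \<theta>
    using fin_cost_round_col_le[OF that] by (rule mult_p_mono[OF that])
  have sum_row: "p x * (\<Sum>j<K. row_bound (real j / real K) x)
        \<le> p x * (real K * (\<Sum>y<N. fin_cost x y * P x y) + (\<Sum>y=Suc (first_fin x)..<N. cost_incr x y))"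
    if "x < M" for x
    using sum_row_bound_le[OF K that] by (rule mult_p_mono[OF that])
  have "(\<Sum>j<K. det_cost (round_map (real j / real K)))
      \<le> (\<Sum>j<K. \<Sum>x<M. p x * row_bound (real j / real K) x)"
  proof (intro sum_mono)
    fix j
    have "det_cost (round_map (real j / real K)) = (\<Sum>x<M. p x * fin_cost x (round_col (real j / real K) x))"
      using det_cost_eq[OF round_map_det_map] unfolding round_map_def by simp
    then show "det_cost (round_map (real j / real K)) \<le> (\<Sum>x<M. p x * row_bound (real j / real K) x)"
      using row by (auto intro: sum_mono)
  qed
  also have "\<dots> = (\<Sum>x<M. p x * (\<Sum>j<K. row_bound (real j / real K) x))"
    by (simp add: sum_distrib_left sum.swap[of _ "{..<K}"])
  also have "\<dots> \<le> (\<Sum>x<M. p x * (real K * (\<Sum>y<N. fin_cost x y * P x y)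
                                   + (\<Sum>y=Suc (first_fin x)..<N. cost_incr x y)))"
    using sum_row by (intro sum_mono) auto
  also have "\<dots> = real K * cost M N p c P + rounding_slack"
    unfolding cost_eq_sum[OF P] rounding_slack_def
    by (simp add: algebra_simps sum.distrib sum_distrib_left)
  finally show ?thesis .
qed

lemma sum_det_leak_round_map_le:
  assumes K: "0 < K"
  shows "(\<Sum>j<K. det_leak (round_map (real j / real K))) \<le> real K * exp_leak M N P + 1"
proof -
  have "(\<Sum>j<K. det_leak (round_map (real j / real K))) \<le> (\<Sum>j<K. level (real j / real K) (exp_leak M N P))"
    using K by (intro sum_mono det_leak_round_map) auto
  then show ?thesis
    using sum_ceiling_shifts_bounds(2)[OF K] unfolding level_def by (meson order_trans)
qed

lemma round_map_average:
  assumes "0 \<le> \<alpha>" and K: "0 < K"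
  shows "\<exists>j<K. det_cost (round_map (real j / real K)) + \<alpha> * det_leak (round_map (real j / real K))
            \<le> cost M N p c P + \<alpha> * exp_leak M N P + (rounding_slack + \<alpha>) / real K"
proof (rule exists_le_average[OF K])
  have "(\<Sum>j<K. det_cost (round_map (real j / real K)) + \<alpha> * det_leak (round_map (real j / real K)))
      \<le> real K * cost M N p c P + rounding_slack + \<alpha> * (real K * exp_leak M N P + 1)"
    using sum_det_cost_round_map_le[OF K] mult_left_mono[OF sum_det_leak_round_map_le[OF K] \<open>0 \<le> \<alpha>\<close>]
    by (simp add: sum.distrib sum_distrib_left)
  also have "\<dots> = real K * (cost M N p c P + \<alpha> * exp_leak M N P + (rounding_slack + \<alpha>) / real K)"
    using K by (simp add: field_simps)
  finally show "(\<Sum>j<K. det_cost (round_map (real j / real K)) + \<alpha> * det_leak (round_map (real j / real K)))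
      \<le> real K * (cost M N p c P + \<alpha> * exp_leak M N P + (rounding_slack + \<alpha>) / real K)" .
qed

end

context leakage_problem
begin

lemma exists_det_map_le:
  assumes P: "prot_scheme M N p c P" and "0 \<le> \<alpha>"
  shows "\<exists>f\<in>det_maps. det_cost f + \<alpha> * det_leak f \<le> cost M N p c P + \<alpha> * exp_leak M N P"
proof -
  interpret rounding M N p c P
    by (intro rounding.intro rounding_axioms.intro leakage_problem_axioms P)
  obtain f where f: "f \<in> det_maps" "\<forall>g\<in>det_maps. det_cost f + \<alpha> * det_leak f \<le> det_cost g + \<alpha> * det_leak g"
    using ex_minimizer_finite[OF finite_det_maps, of "\<lambda>f. det_cost f + \<alpha> * det_leak f"] round_map_det_map
    by blast
  have "det_cost f + \<alpha> * det_leak f \<le> cost M N p c P + \<alpha> * exp_leak M N P"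
  proof (rule field_le_epsilon)
    fix e :: real
    assume "0 < e"
    define K where "K = nat \<lceil>(rounding_slack + \<alpha>) / e\<rceil> + 1"
    have "0 < K"
      unfolding K_def by simp
    have "(rounding_slack + \<alpha>) / e \<le> real K"
      unfolding K_def by linarith
    then have slack: "(rounding_slack + \<alpha>) / real K \<le> e"
      using \<open>0 < e\<close> \<open>0 < K\<close> by (simp add: divide_le_eq mult.commute)
    obtain j where j: "det_cost (round_map (real j / real K)) + \<alpha> * det_leak (round_map (real j / real K))
        \<le> cost M N p c P + \<alpha> * exp_leak M N P + (rounding_slack + \<alpha>) / real K"
      using round_map_average[OF \<open>0 \<le> \<alpha>\<close> \<open>0 < K\<close>] by blast
    have "det_cost f + \<alpha> * det_leak f
        \<le> det_cost (round_map (real j / real K)) + \<alpha> * det_leak (round_map (real j / real K))"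
      using f(2) round_map_det_map by blast
    with j slack show "det_cost f + \<alpha> * det_leak f \<le> cost M N p c P + \<alpha> * exp_leak M N P + e"
      by linarith
  qed
  with f(1) show ?thesis
    by blast
qed

lemma ex_det_minimizer:
  "\<exists>f\<in>det_maps. \<forall>g\<in>det_maps. det_cost f + \<alpha> * det_leak f \<le> det_cost g + \<alpha> * det_leak g"
proof -
  have "det_maps \<noteq> {}"
    using det_map_leak_1 by blast
  then show ?thesis
    by (rule ex_minimizer_finite[OF finite_det_maps])
qed

lemma det_minimizer_le_scheme:
  assumes "0 \<le> \<alpha>" and "\<forall>g\<in>det_maps. det_cost f + \<alpha> * det_leak f \<le> det_cost g + \<alpha> * det_leak g"
    and "prot_scheme M N p c P"
  shows "det_cost f + \<alpha> * det_leak f \<le> cost M N p c P + \<alpha> * exp_leak M N P"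
proof -
  obtain g where "g \<in> det_maps" "det_cost g + \<alpha> * det_leak g \<le> cost M N p c P + \<alpha> * exp_leak M N P"
    using exists_det_map_le[OF assms(3,1)] by blast
  with assms(2) show ?thesis
    by (meson order_trans)
qed

lemma det_minimizer_le_S_set:
  assumes "0 \<le> \<alpha>" and "\<forall>g\<in>det_maps. det_cost f + \<alpha> * det_leak f \<le> det_cost g + \<alpha> * det_leak g"
    and "(L, C) \<in> S_set M N p c"
  shows "det_cost f + \<alpha> * det_leak f \<le> C + \<alpha> * L"
proof -
  obtain P where P: "prot_scheme M N p c P" "exp_leak M N P \<le> L" "cost M N p c P \<le> C"
    using assms(3) achieves_iff unfolding S_set_def by auto
  have "\<alpha> * exp_leak M N P \<le> \<alpha> * L"
    using P(2) \<open>0 \<le> \<alpha>\<close> by (rule mult_left_mono)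
  with det_minimizer_le_scheme[OF assms(1,2) P(1)] P(3) show ?thesis
    by linarith
qed

lemma det_point_in_Sd_set:
  assumes "f \<in> det_maps"
  shows "(det_leak f, det_cost f) \<in> Sd_set M N p c"
proof -
  have "achieves M N p c (det_matrix f) (det_leak f) (det_cost f)"
    using achieves_iff[OF prot_scheme_det_matrix[OF assms]] by (simp add: cost_def)
  then show ?thesis
    using det_scheme_det_matrix[OF assms] unfolding Sd_set_def by blast
qed

lemma Sd_set_subset_S_set: "Sd_set M N p c \<subseteq> S_set M N p c"
  unfolding Sd_set_def S_set_def det_scheme_def by auto

lemma weighted_min_attained_deterministically:
  assumes "0 \<le> \<alpha>"
  shows "\<exists>m. (\<exists>(L, C)\<in>S_set M N p c. C + \<alpha> * L = m) \<and>
             (\<forall>(L, C)\<in>S_set M N p c. m \<le> C + \<alpha> * L) \<and>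
             (\<exists>(L, C)\<in>Sd_set M N p c. C + \<alpha> * L = m) \<and>
             (\<forall>(L, C)\<in>Sd_set M N p c. m \<le> C + \<alpha> * L)"
proof -
  obtain f where f: "f \<in> det_maps"
    and opt: "\<forall>g\<in>det_maps. det_cost f + \<alpha> * det_leak f \<le> det_cost g + \<alpha> * det_leak g"
    using ex_det_minimizer by blast
  have "(det_leak f, det_cost f) \<in> Sd_set M N p c"
    using f by (rule det_point_in_Sd_set)
  with Sd_set_subset_S_set det_minimizer_le_S_set[OF assms opt] show ?thesis
    by (intro exI[of _ "det_cost f + \<alpha> * det_leak f"]) blast
qed

lemma det_minimizer_le_Cstar_d:
  assumes "0 \<le> \<alpha>" and f: "f \<in> det_maps"
    and opt: "\<forall>g\<in>det_maps. det_cost f + \<alpha> * det_leak f \<le> det_cost g + \<alpha> * det_leak g"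
  shows "det_cost f \<le> Cstar_d M N p c (det_leak f)"
  unfolding Cstar_d_def
proof (rule cInf_greatest)
  show "{C. (det_leak f, C) \<in> Sd_set M N p c} \<noteq> {}"
    using det_point_in_Sd_set[OF f] by auto
  fix C
  assume "C \<in> {C. (det_leak f, C) \<in> Sd_set M N p c}"
  then have "(det_leak f, C) \<in> S_set M N p c"
    using Sd_set_subset_S_set by auto
  then have "det_cost f + \<alpha> * det_leak f \<le> C + \<alpha> * det_leak f"
    by (rule det_minimizer_le_S_set[OF assms(1) opt])
  then show "det_cost f \<le> C"
    by simp
qed

lemma Cstar_eq_cost:
  assumes P: "prot_scheme M N p c P" "exp_leak M N P \<le> L"
    and opt: "\<And>Q. prot_scheme M N p c Q \<Longrightarrow> exp_leak M N Q \<le> L \<Longrightarrow> cost M N p c P \<le> cost M N p c Q"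
  shows "Cstar M N p c L = cost M N p c P"
  unfolding Cstar_def
proof (rule antisym)
  have P_in: "cost M N p c P \<in> {C. (L, C) \<in> S_set M N p c}"
    using P achieves_iff unfolding S_set_def by (auto simp: cost_def)
  moreover have "bdd_below {C. (L, C) \<in> S_set M N p c}"
    unfolding S_set_def achieves_def by (auto intro: bdd_belowI[of _ 0])
  ultimately show "Inf {C. (L, C) \<in> S_set M N p c} \<le> cost M N p c P"
    by (rule cInf_lower)
  show "cost M N p c P \<le> Inf {C. (L, C) \<in> S_set M N p c}"
  proof (rule cInf_greatest)
    show "{C. (L, C) \<in> S_set M N p c} \<noteq> {}"
      using P_in by auto
    fix C
    assume "C \<in> {C. (L, C) \<in> S_set M N p c}"
    then obtain Q where "prot_scheme M N p c Q" "exp_leak M N Q \<le> L" "cost M N p c Q \<le> C"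
      unfolding S_set_def using achieves_iff by auto
    with opt show "cost M N p c P \<le> C"
      by force
  qed
qed

lemma mixed_cost_le_on_supporting_line:
  assumes "0 \<le> \<alpha>"
    and opt_a: "\<forall>g\<in>det_maps. det_cost a + \<alpha> * det_leak a \<le> det_cost g + \<alpha> * det_leak g"
    and same_value: "det_cost a + \<alpha> * det_leak a = det_cost b + \<alpha> * det_leak b"
    and slack: "\<alpha> * (t * det_leak a + (1 - t) * det_leak b) = \<alpha> * L"
    and Q: "prot_scheme M N p c Q" "exp_leak M N Q \<le> L"
  shows "t * det_cost a + (1 - t) * det_cost b \<le> cost M N p c Q"
proof -
  have "t * det_cost a + (1 - t) * det_cost b
      = t * (det_cost a + \<alpha> * det_leak a) + (1 - t) * (det_cost b + \<alpha> * det_leak b)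
        - \<alpha> * (t * det_leak a + (1 - t) * det_leak b)"
    by (simp add: algebra_simps)
  also have "\<dots> = det_cost a + \<alpha> * det_leak a - \<alpha> * L"
    unfolding slack same_value[symmetric] by (simp add: algebra_simps)
  also have "\<dots> \<le> cost M N p c Q + \<alpha> * exp_leak M N Q - \<alpha> * L"
    using det_minimizer_le_scheme[OF \<open>0 \<le> \<alpha>\<close> opt_a Q(1)] by simp
  also have "\<dots> \<le> cost M N p c Q"
    using mult_left_mono[OF Q(2) \<open>0 \<le> \<alpha>\<close>] by simp
  finally show ?thesis .
qed

lemma Cstar_attained_by_det_mixture:
  assumes "1 \<le> L"
  shows "\<exists>t::real. \<exists>P1 P2. 0 \<le> t \<and> t \<le> 1 \<and>
           det_scheme M N p c P1 \<and> det_scheme M N p c P2 \<and>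
           (let P = (\<lambda>x y. t * P1 x y + (1 - t) * P2 x y) in
              prot_scheme M N p c P \<and>
              achieves M N p c P L (Cstar M N p c L) \<and>
              exp_leak M N P \<le> L \<and>
              Cstar M N p c L \<le> t * Cstar_d M N p c (exp_leak M N P1)
                                + (1 - t) * Cstar_d M N p c (exp_leak M N P2))"
proof -
  obtain f1 where "f1 \<in> det_maps" "det_leak f1 \<le> L"
    using det_map_leak_1 assms by force
  then obtain \<alpha> a b t where "0 \<le> \<alpha>" and ab: "a \<in> det_maps" "b \<in> det_maps" and t: "0 \<le> t" "t \<le> 1"
    and opt_a: "\<forall>g\<in>det_maps. det_cost a + \<alpha> * det_leak a \<le> det_cost g + \<alpha> * det_leak g"
    and same_value: "det_cost a + \<alpha> * det_leak a = det_cost b + \<alpha> * det_leak b"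
    and mix_leak: "t * det_leak a + (1 - t) * det_leak b \<le> L"
    and slack: "\<alpha> * (t * det_leak a + (1 - t) * det_leak b) = \<alpha> * L"
    using supporting_line_at_level[OF finite_det_maps, of f1 det_leak L det_cost] by blast
  have opt_b: "\<forall>g\<in>det_maps. det_cost b + \<alpha> * det_leak b \<le> det_cost g + \<alpha> * det_leak g"
    using opt_a same_value by simp
  define P where "P = (\<lambda>x y. t * det_matrix a x y + (1 - t) * det_matrix b x y)"
  note mix = mixture[OF prot_scheme_det_matrix[OF ab(1)] prot_scheme_det_matrix[OF ab(2)] t,
                     folded P_def]
  have "exp_leak M N P \<le> L"
    using mix(3) mix_leak by linarith
  have "cost M N p c P \<le> cost M N p c Q" if "prot_scheme M N p c Q" "exp_leak M N Q \<le> L" for Q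
    unfolding mix(2) using mixed_cost_le_on_supporting_line[OF \<open>0 \<le> \<alpha>\<close> opt_a same_value slack that] .
  then have Cstar: "Cstar M N p c L = cost M N p c P"
    using Cstar_eq_cost[OF mix(1) \<open>exp_leak M N P \<le> L\<close>] by blast
  have "Cstar M N p c L \<le> t * Cstar_d M N p c (det_leak a) + (1 - t) * Cstar_d M N p c (det_leak b)"
    unfolding Cstar mix(2)
    using det_minimizer_le_Cstar_d[OF \<open>0 \<le> \<alpha>\<close> ab(1) opt_a] det_minimizer_le_Cstar_d[OF \<open>0 \<le> \<alpha>\<close> ab(2) opt_b] t
    by (intro add_mono mult_left_mono) auto
  moreover have "achieves M N p c P L (Cstar M N p c L)"
    using achieves_iff[OF mix(1)] \<open>exp_leak M N P \<le> L\<close> Cstar by (simp add: cost_def)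
  ultimately show ?thesis
    using t ab det_scheme_det_matrix mix(1) \<open>exp_leak M N P \<le> L\<close>
    by (intro exI[of _ t] exI[of _ "det_matrix a"] exI[of _ "det_matrix b"]) (simp add: P_def Let_def)
qed

end

theorem theorem1:
  fixes M N :: nat and p :: "nat \<Rightarrow> real" and c :: "nat \<Rightarrow> nat \<Rightarrow> ennreal"
  assumes p_nonneg: "\<forall>x<M. 0 \<le> p x"
    and p_sum: "(\<Sum>x<M. p x) = 1"
    and stair: "staircase_nondecr M N c"
    and exists: "\<exists>P. prot_scheme M N p c P"
  shows "(\<forall>\<alpha>::real. \<alpha> > 0 \<longrightarrow>
           (\<exists>m. (\<exists>(L, C)\<in>S_set M N p c. C + \<alpha> * L = m) \<and>
                (\<forall>(L, C)\<in>S_set M N p c. m \<le> C + \<alpha> * L) \<and>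
                (\<exists>(L, C)\<in>Sd_set M N p c. C + \<alpha> * L = m) \<and>
                (\<forall>(L, C)\<in>Sd_set M N p c. m \<le> C + \<alpha> * L)))
       \<and> (\<forall>L::real. L \<ge> 1 \<longrightarrow>
           (\<exists>t::real. \<exists>P1 P2. 0 \<le> t \<and> t \<le> 1 \<and>
               det_scheme M N p c P1 \<and> det_scheme M N p c P2 \<and>
               (let P = (\<lambda>x y. t * P1 x y + (1 - t) * P2 x y) in
                  prot_scheme M N p c P \<and>
                  achieves M N p c P L (Cstar M N p c L) \<and>
                  exp_leak M N P \<le> L \<and>
                  Cstar M N p c L \<le> t * Cstar_d M N p c (exp_leak M N P1)
                                    + (1 - t) * Cstar_d M N p c (exp_leak M N P2))))"
proof -
  interpret leakage_problem M N p c
    using assms by unfold_locales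
  show ?thesis
    using weighted_min_attained_deterministically Cstar_attained_by_det_mixture by simp
qed

end
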